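(* Let $m<n$, let $A\in\mathbb{R}^{m\times n}$ and $b\in\mathbb{R}^{m}$, and assume that the system $Ax=b$ has a solution. Partition $A=[B~\tilde{B}]$ with $B\in\mathbb{R}^{m\times m}$ and $\tilde{B}\in\mathbb{R}^{m\times(n-m)}$. Assume that every diagonal entry of $B$ is nonzero and that every row $\tilde{B}_i$ of $\tilde{B}$ is nonzero. Let $L$ be the lower triangular part of $B$ (including the diagonal), $R=B-L$, $N(\tilde{B})=\operatorname{diag}(\|\tilde{B}_1\|_1,\ldots,\|\tilde{B}_m\|_1)$, and let $s(\tilde{B})\in\mathbb{R}^{(n-m)\times m}$ be the matrix whose $(j,i)$ entry is the sign ($1$, $0$ or $-1$) of the $(j,i)$ entry of $\tilde{B}^T$. Starting from any $x^{(0)}=\begin{bmatrix}x_1^{(0)}\\ x_2^{(0)}\end{bmatrix}$ with $x_1^{(0)}\in\mathbb{R}^m$, $x_2^{(0)}\in\mathbb{R}^{n-m}$, define for $k\ge 0$ the generalized Gauss–Seidel iteration $$x_2^{(k+1)}=x_2^{(k)}+s(\tilde{B})\,d^{(k)},\qquad d^{(k)}_i=\frac{b_i-B_ix_1^{(k)}-\tilde{B}_ix_2^{(k)}}{m\|\tilde{B}_i\|_1}\ (i=1,\ldots,m),$$ $$x_1^{(k+1)}=L^{-1}\big(-Rx_1^{(k)}+b-\tilde{B}x_2^{(k+1)}\big),\qquad x^{(k+1)}=\begin{bmatrix}x_1^{(k+1)}\\ x_2^{(k+1)}\end{bmatrix},$$ where $B_i,\tilde{B}_i$ denote the $i$th rows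 of $B,\tilde{B}$. If, for some matrix norm $\|\cdot\|$ on $\mathbb{R}^{m\times m}$, $$\|I-BL^{-1}\|<1\quad\text{and}\quad \|mI-\tilde{B}\,s(\tilde{B})\,N(\tilde{B})^{-1}\|<m,$$ then the sequence $(x^{(k)})$ converges and its limit $x=\lim_k x^{(k)}$ is a solution of $Ax=b$.
   Context: $\|\cdot\|_1$ denotes the $\ell_1$-norm of a vector. The $x_2$-update is the iterative method of Wheaton–Awoniyi applied to $\tilde{B}y=b-Bx_1^{(k)}$, and the $x_1$-update is one Gauss–Seidel step for $Bz=b-\tilde{B}x_2^{(k+1)}$ starting at $x_1^{(k)}$. *)

theory Defs
  imports "HOL-Analysis.Analysis"
begin

text \<open>Index type 'm (size m) carries a linear order so that "lower triangular" makes sense;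
  index type 'k has size n - m (automatically at least 1, so m < n).\<close>

definition lower_part :: "real^('m::{finite,linorder})^('m::{finite,linorder}) \<Rightarrow> real^('m::{finite,linorder})^('m::{finite,linorder})" where
  "lower_part B = (\<chi> i j. if j \<le> i then B$i$j else 0)"

definition strict_upper_part :: "real^('m::{finite,linorder})^('m::{finite,linorder}) \<Rightarrow> real^('m::{finite,linorder})^('m::{finite,linorder})" where
  "strict_upper_part B = B - lower_part B"

definition row_l1 :: "real^'k^'m \<Rightarrow> 'm \<Rightarrow> real" where
  "row_l1 Bt i = (\<Sum>l\<in>UNIV. \<bar>Bt$i$l\<bar>)"

definition row_norm_diag :: "real^'k^'m \<Rightarrow> real^'m^'m" where
  "row_norm_diag Bt = (\<chi> i j. if i = j then row_l1 Bt i else 0)"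

definition sign_mat :: "real^'k^'m \<Rightarrow> real^'m^'k" where
  "sign_mat Bt = (\<chi> j i. sgn ((transpose Bt)$j$i))"

definition is_matrix_norm :: "(real^'m^'m \<Rightarrow> real) \<Rightarrow> bool" where
  "is_matrix_norm nm \<longleftrightarrow>
     (\<forall>M. 0 \<le> nm M) \<and> (\<forall>M. nm M = 0 \<longleftrightarrow> M = 0) \<and>
     (\<forall>c M. nm (c *\<^sub>R M) = \<bar>c\<bar> * nm M) \<and>
     (\<forall>M P. nm (M + P) \<le> nm M + nm P) \<and>
     (\<forall>M P. nm (M ** P) \<le> nm M * nm P)"

definition gs_step :: "real^('m::{finite,linorder})^('m::{finite,linorder}) \<Rightarrow> real^'k^('m::{finite,linorder}) \<Rightarrow> real^('m::{finite,linorder})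
    \<Rightarrow> ((real^('m::{finite,linorder})) \<times> (real^'k)) \<Rightarrow> ((real^('m::{finite,linorder})) \<times> (real^'k))" where
  "gs_step B Bt b x =
     (let x1 = fst x; x2 = snd x;
          d = (\<chi> i. (b$i - (B$i) \<bullet> x1 - (Bt$i) \<bullet> x2) / (real CARD('m) * row_l1 Bt i));
          x2' = x2 + sign_mat Bt *v d;
          x1' = matrix_inv (lower_part B) *v (- (strict_upper_part B *v x1) + b - Bt *v x2')
      in (x1', x2'))"

end

theory Submission
  imports Defs
begin

text \<open>
  Let \<open>r = b - B x\<^sub>1 - B\<^sub>t x\<^sub>2\<close> be the residual of the current iterate. The \<open>x\<^sub>2\<close>-update
  turns it into \<open>P r\<close> with \<open>P = I - (1/m) B\<^sub>t s(B\<^sub>t) N(B\<^sub>t)\<^sup>-\<^sup>1\<close>, and the Gauss--Seidel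
  \<open>x\<^sub>1\<close>-update then turns \<open>P r\<close> into \<open>(I - B L\<^sup>-\<^sup>1) P r\<close>. The two hypotheses say that both
  factors have norm less than one, so the residuals decay geometrically. The increments of \<open>x\<^sub>1\<close>
  and \<open>x\<^sub>2\<close> are fixed linear images of the residual, hence both components converge, and by
  continuity the limit has residual zero. In particular, solvability of \<open>A x = b\<close> is a
  consequence rather than a hypothesis.
\<close>

lemma matrix_inv_left:
  fixes A :: "'a::semiring_1^'n^'m"
  assumes "invertible A"
  shows "matrix_inv A ** A = mat 1"
  using someI_ex[OF assms[unfolded invertible_def]] by (simp add: matrix_inv_def)

lemma invertible_lower_triangular:
  fixes L :: "'a::field^('n::{finite,linorder})^('n::{finite,linorder})"
  assumes upper_zero: "\<And>i j. i < j \<Longrightarrow> L$i$j = 0" and diag_nz: "\<And>i. L$i$i \<noteq> 0"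
  shows "invertible L"
  unfolding invertible_left_inverse matrix_left_invertible_ker
proof (intro allI impI, rule ccontr)
  fix x
  assume Lx: "L *v x = 0" and "x \<noteq> 0"
  define i where "i = Min {i. x$i \<noteq> 0}"
  have "{i. x$i \<noteq> 0} \<noteq> {}" using \<open>x \<noteq> 0\<close> by (auto simp: vec_eq_iff)
  then have xi: "x$i \<noteq> 0"
    unfolding i_def using Min_in[of "{i. x$i \<noteq> 0}"] by simp
  have below: "x$j = 0" if "j < i" for j
    using Min_le[of "{i. x$i \<noteq> 0}" j] that unfolding i_def by (meson finite leD mem_Collect_eq)
  have "L$i$j * x$j = (if j = i then L$i$i * x$i else 0)" for j
    using below[of j] upper_zero[of i j] by (cases "j < i"; cases "i < j") auto
  then have "(L *v x)$i = (\<Sum>j\<in>UNIV. if j = i then L$i$i * x$i else 0)"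
    unfolding matrix_vector_mult_def vec_lambda_beta by (rule sum.cong[OF refl])
  then have "(L *v x)$i = L$i$i * x$i" by simp
  with Lx xi diag_nz[of i] show False by simp
qed

lemma row_l1_pos:
  assumes "Bt$i \<noteq> 0"
  shows "row_l1 Bt i > 0"
proof -
  obtain l where "Bt$i$l \<noteq> 0" using assms by (auto simp: vec_eq_iff)
  moreover have "\<bar>Bt$i$l\<bar> \<le> row_l1 Bt i" unfolding row_l1_def
    by (rule member_le_sum) auto
  ultimately show ?thesis by simp
qed

lemma matrix_inv_row_norm_diag_mult:
  fixes Bt :: "real^'k^('m::{finite,linorder})"
  assumes "\<forall>i. Bt$i \<noteq> 0"
  shows "matrix_inv (row_norm_diag Bt) *v r = (\<chi> i. r$i / row_l1 Bt i)"
proof -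
  define N where "N = row_norm_diag Bt"
  define w where "w = (\<chi> i. r$i / row_l1 Bt i)"
  have pos: "row_l1 Bt i > 0" for i using row_l1_pos assms by blast
  then have "row_l1 Bt i \<noteq> 0" for i by (metis less_irrefl)
  then have "invertible N"
    by (intro invertible_lower_triangular) (auto simp: N_def row_norm_diag_def)
  have "(N *v w)$i = r$i" for i
  proof -
    have "(N *v w)$i = row_l1 Bt i * w$i"
      by (simp add: matrix_vector_mult_def N_def row_norm_diag_def if_distrib[of "\<lambda>x. x * _"]
          sum.If_cases)
    then show ?thesis using pos[of i] by (simp add: w_def)
  qed
  then have "N *v w = r" by (simp add: vec_eq_iff)
  then have "matrix_inv N *v r = (matrix_inv N ** N) *v w" by (metis matrix_vector_mul_assoc)
  then show ?thesis using matrix_inv_left[OF \<open>invertible N\<close>] by (simp add: N_def w_def)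
qed

lemma matrix_norm_entry_bound:
  fixes nm :: "real^'n^'n \<Rightarrow> real"
  assumes nm: "is_matrix_norm nm"
  shows "\<exists>C\<ge>0. \<forall>X i j. \<bar>X$i$j\<bar> \<le> C * nm X"
proof -
  define E :: "'n \<Rightarrow> 'n \<Rightarrow> real^'n^'n" where
    "E i j = (\<chi> a c. if a = i \<and> c = j then 1 else 0)" for i j
  have nm_nonneg: "\<And>X. 0 \<le> nm X" and nm_zero: "\<And>X. nm X = 0 \<longleftrightarrow> X = 0"
    and nm_scale: "\<And>c X. nm (c *\<^sub>R X) = \<bar>c\<bar> * nm X"
    and nm_mult: "\<And>X Y. nm (X ** Y) \<le> nm X * nm Y"
    using nm unfolding is_matrix_norm_def by blast+
  have E_pos: "nm (E i j) > 0" for i j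
  proof -
    have "E i j $ i $ j \<noteq> 0 $ i $ j" by (simp add: E_def)
    then show ?thesis using nm_nonneg[of "E i j"] nm_zero[of "E i j"] by force
  qed
  have left: "E i i ** X = (\<chi> a c. if a = i then X$i$c else 0)" for i X
    unfolding E_def matrix_matrix_mult_def
    by (simp add: vec_eq_iff if_distrib[of "\<lambda>x. x * _"] sum.If_cases)
  have right: "Y ** E j j = (\<chi> a c. if c = j then Y$a$j else 0)" for j Y
    unfolding E_def matrix_matrix_mult_def
    by (simp add: vec_eq_iff if_distrib[of "\<lambda>x. _ * x"] sum.If_cases)
  have bound: "\<bar>X$i$j\<bar> \<le> nm (E i i) * nm (E j j) / nm (E i j) * nm X" for i j X
  proof -
    have "E i i ** X ** E j j = X$i$j *\<^sub>R E i j"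
      unfolding left right by (simp add: E_def vec_eq_iff)
    then have "\<bar>X$i$j\<bar> * nm (E i j) = nm (E i i ** X ** E j j)"
      by (simp add: nm_scale)
    also have "\<dots> \<le> nm (E i i ** X) * nm (E j j)"
      by (rule nm_mult)
    also have "\<dots> \<le> nm (E i i) * nm X * nm (E j j)"
      by (intro mult_right_mono nm_mult nm_nonneg)
    finally show ?thesis
      using E_pos[of i j] by (simp add: field_simps)
  qed
  define C where "C = (\<Sum>i\<in>UNIV. \<Sum>j\<in>UNIV. nm (E i i) * nm (E j j) / nm (E i j))"
  have terms_nonneg: "0 \<le> nm (E i i) * nm (E j j) / nm (E i j)" for i j
    by (simp add: nm_nonneg)
  have term_le_C: "nm (E i i) * nm (E j j) / nm (E i j) \<le> C" for i j
  proof -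
    have "nm (E i i) * nm (E j j) / nm (E i j) \<le> (\<Sum>j\<in>UNIV. nm (E i i) * nm (E j j) / nm (E i j))"
      by (rule member_le_sum) (auto intro: terms_nonneg)
    also have "\<dots> \<le> C"
      unfolding C_def by (rule member_le_sum) (auto intro: sum_nonneg terms_nonneg)
    finally show ?thesis .
  qed
  have "\<bar>X$i$j\<bar> \<le> C * nm X" for X i j
    using bound[of X i j] mult_right_mono[OF term_le_C nm_nonneg] by (rule order_trans)
  moreover have "0 \<le> C"
    using terms_nonneg term_le_C order_trans by blast
  ultimately show ?thesis by blast
qed

lemma matrix_norm_mult_vector_bound:
  fixes nm :: "real^'n^'n \<Rightarrow> real"
  assumes "is_matrix_norm nm"
  shows "\<exists>C\<ge>0. \<forall>A x. norm (A *v x) \<le> C * nm A * norm x"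
proof -
  obtain C where "C \<ge> 0" and entry: "\<And>X i j. \<bar>X$i$j\<bar> \<le> C * nm X"
    using matrix_norm_entry_bound[OF assms] by blast
  have nm_nonneg: "\<And>X. 0 \<le> nm X" using assms unfolding is_matrix_norm_def by blast
  have "norm (A *v x) \<le> real (CARD('n) * CARD('n)) * C * nm A * norm x" for A x
  proof -
    have "norm (A *v x) \<le> (\<Sum>i\<in>UNIV. \<bar>\<Sum>j\<in>UNIV. A$i$j * x$j\<bar>)"
      using norm_le_l1_cart[of "A *v x"] by (simp add: matrix_vector_mult_def)
    also have "\<dots> \<le> (\<Sum>i\<in>UNIV. \<Sum>j\<in>UNIV. \<bar>A$i$j\<bar> * \<bar>x$j\<bar>)"
      by (intro sum_mono order_trans[OF sum_abs]) (simp add: abs_mult)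
    also have "\<dots> \<le> (\<Sum>i::'n\<in>UNIV. \<Sum>j::'n\<in>UNIV. C * nm A * norm x)"
      using nm_nonneg \<open>C \<ge> 0\<close> by (intro sum_mono mult_mono entry component_le_norm_cart) simp_all
    finally show ?thesis by (simp add: mult.assoc)
  qed
  with \<open>C \<ge> 0\<close> show ?thesis
    by (intro exI[of _ "real (CARD('n) * CARD('n)) * C"]) simp
qed

lemma linear_recurrence_geometric_bound:
  fixes nm :: "real^'n^'n \<Rightarrow> real" and r :: "nat \<Rightarrow> real^'n"
  assumes nm: "is_matrix_norm nm" and rec: "\<And>k. r (Suc k) = M *v r k"
  shows "\<exists>K. \<forall>k. norm (r k) \<le> K * nm M ^ k"
proof -
  obtain C where "C \<ge> 0" and C: "\<And>A x. norm (A *v x) \<le> C * nm A * norm x"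
    using matrix_norm_mult_vector_bound[OF nm] by blast
  define P where "P k = ((\<lambda>A. M ** A) ^^ k) (mat 1)" for k
  have r_eq: "r k = P k *v r 0" for k
    by (induction k) (simp_all add: P_def rec matrix_vector_mul_assoc)
  have P_bound: "nm (P k) \<le> nm M ^ k * nm (mat 1)" for k
  proof (induction k)
    case (Suc k)
    have "nm (P (Suc k)) \<le> nm M * nm (P k)"
      using nm unfolding P_def is_matrix_norm_def by simp
    also have "\<dots> \<le> nm M * (nm M ^ k * nm (mat 1))"
      using Suc nm unfolding is_matrix_norm_def by (simp add: mult_left_mono)
    finally show ?case by (simp add: mult.assoc)
  qed (simp add: P_def)
  have "norm (r k) \<le> C * nm (mat 1) * norm (r 0) * nm M ^ k" for k
  proof -
    have "norm (r k) \<le> C * nm (P k) * norm (r 0)"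
      using C r_eq by metis
    also have "\<dots> \<le> C * (nm M ^ k * nm (mat 1)) * norm (r 0)"
      using P_bound \<open>C \<ge> 0\<close> by (intro mult_right_mono mult_left_mono) simp_all
    finally show ?thesis by (simp add: mult_ac)
  qed
  then show ?thesis by blast
qed

lemma convergent_of_geometric_increments:
  fixes v :: "nat \<Rightarrow> 'a::banach"
  assumes "\<And>k. norm (v (Suc k) - v k) \<le> D * q ^ k" and "0 \<le> q" "q < 1"
  shows "convergent v"
proof -
  have "summable (\<lambda>k. D * q ^ k)"
    using assms by (intro summable_mult summable_geometric) simp
  then have "summable (\<lambda>k. v (Suc k) - v k)"
    by (rule summable_comparison_test') (rule assms(1))
  then have "(\<lambda>n. v 0 + (\<Sum>k<n. v (Suc k) - v k)) \<longlonglongrightarrow> v 0 + (\<Sum>k. v (Suc k) - v k)"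
    by (intro tendsto_add tendsto_const summable_LIMSEQ)
  then show ?thesis
    by (auto simp: sum_lessThan_telescope convergent_def)
qed

lemma iteration_converges_to_solution:
  fixes B :: "real^'n^'m" and Bt :: "real^'k^'m" and b :: "real^'m" and M :: "real^'m^'m"
    and Y1 :: "real^'m^'n" and Y2 :: "real^'m^'k"
    and f :: "(real^'n) \<times> (real^'k) \<Rightarrow> (real^'n) \<times> (real^'k)"
  defines "res x \<equiv> b - B *v fst x - Bt *v snd x"
  assumes nm: "is_matrix_norm nm" and contraction: "nm M < 1"
    and fst_step: "\<And>x. fst (f x) = fst x + Y1 *v res x"
    and snd_step: "\<And>x. snd (f x) = snd x + Y2 *v res x"
    and res_step: "\<And>x. res (f x) = M *v res x"
  shows "\<exists>y1 y2. (\<lambda>k. (f ^^ k) x0) \<longlonglongrightarrow> (y1, y2) \<and> B *v y1 + Bt *v y2 = b"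
proof -
  define X where "X k = (f ^^ k) x0" for k
  have "0 \<le> nm M" using nm by (simp add: is_matrix_norm_def)
  obtain K where K: "\<And>k. norm (res (X k)) \<le> K * nm M ^ k"
    using linear_recurrence_geometric_bound[OF nm, of "\<lambda>k. res (X k)" M] res_step
    by (auto simp: X_def)
  have convergent: "convergent v"
    if "\<And>k. v (Suc k) = v k + Y *v res (X k)" for v :: "nat \<Rightarrow> real^'a" and Y :: "real^'m^'a"
  proof -
    obtain D where "D > 0" and D: "\<And>z. norm (Y *v z) \<le> norm z * D"
      using bounded_linear.pos_bounded[OF matrix_vector_mul_bounded_linear] by blast
    have "norm (v (Suc k) - v k) \<le> (D * K) * nm M ^ k" for k
      using that[of k] D[of "res (X k)"] mult_right_mono[OF K[of k] less_imp_le[OF \<open>D > 0\<close>]]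
      by (simp add: mult_ac)
    then show ?thesis
      using convergent_of_geometric_increments \<open>0 \<le> nm M\<close> contraction by blast
  qed
  obtain y1 where y1: "(\<lambda>k. fst (X k)) \<longlonglongrightarrow> y1"
    using convergent[of "\<lambda>k. fst (X k)" Y1] fst_step by (auto simp: X_def convergent_def)
  obtain y2 where y2: "(\<lambda>k. snd (X k)) \<longlonglongrightarrow> y2"
    using convergent[of "\<lambda>k. snd (X k)" Y2] snd_step by (auto simp: X_def convergent_def)
  have "(\<lambda>k. res (X k)) \<longlonglongrightarrow> res (y1, y2)"
    unfolding res_def fst_conv snd_conv
    by (intro tendsto_diff tendsto_const y1 y2
        bounded_linear.tendsto[OF matrix_vector_mul_bounded_linear])
  moreover have "(\<lambda>k. res (X k)) \<longlonglongrightarrow> 0"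
  proof (rule Lim_null_comparison)
    show "(\<lambda>k. K * nm M ^ k) \<longlonglongrightarrow> 0"
      using \<open>0 \<le> nm M\<close> contraction by (intro tendsto_mult_right_zero LIMSEQ_power_zero) auto
  qed (use K in simp)
  ultimately have "res (y1, y2) = 0" by (rule LIMSEQ_unique)
  then have "B *v y1 + Bt *v y2 = b" by (simp add: res_def algebra_simps)
  with y1 y2 show ?thesis
    using tendsto_Pair[OF y1 y2] unfolding X_def by auto
qed

lemma gs_step_snd:
  fixes B :: "real^('m::{finite,linorder})^('m::{finite,linorder})"
    and Bt :: "real^'k^('m::{finite,linorder})"
  assumes "\<forall>i. Bt$i \<noteq> 0"
  shows "snd (gs_step B Bt b x) = snd x
    + ((1 / real CARD('m)) *\<^sub>R (sign_mat Bt ** matrix_inv (row_norm_diag Bt)))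
      *v (b - B *v fst x - Bt *v snd x)"
proof -
  let ?r = "b - B *v fst x - Bt *v snd x"
  have "(\<chi> i. (b$i - (B$i) \<bullet> fst x - (Bt$i) \<bullet> snd x) / (real CARD('m) * row_l1 Bt i))
      = (1 / real CARD('m)) *\<^sub>R (matrix_inv (row_norm_diag Bt) *v ?r)"
    by (simp add: matrix_inv_row_norm_diag_mult[OF assms] vec_eq_iff matrix_vector_mul_component)
  then show ?thesis
    by (simp add: gs_step_def Let_def matrix_vector_mult_scaleR scaleR_matrix_vector_assoc
        matrix_vector_mul_assoc matrix_scalar_ac scalar_matrix_assoc[symmetric])
qed

lemma gs_step_fst:
  fixes B :: "real^('m::{finite,linorder})^('m::{finite,linorder})"
    and Bt :: "real^'k^('m::{finite,linorder})"
  assumes "\<forall>i. B$i$i \<noteq> 0"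
  shows "fst (gs_step B Bt b x)
    = fst x + matrix_inv (lower_part B) *v (b - B *v fst x - Bt *v snd (gs_step B Bt b x))"
proof -
  have "invertible (lower_part B)"
    using assms by (intro invertible_lower_triangular) (auto simp: lower_part_def)
  then have "matrix_inv (lower_part B) *v (lower_part B *v fst x) = fst x"
    by (simp add: matrix_vector_mul_assoc matrix_inv_left)
  then show ?thesis
    by (simp add: gs_step_def Let_def strict_upper_part_def algebra_simps)
qed

lemma gs_step_residual_form:
  fixes B :: "real^('m::{finite,linorder})^('m::{finite,linorder})"
    and Bt :: "real^'k^('m::{finite,linorder})" and b :: "real^('m::{finite,linorder})"
  defines "Y \<equiv> (1 / real CARD('m)) *\<^sub>R (sign_mat Bt ** matrix_inv (row_norm_diag Bt))"
    and "Li \<equiv> matrix_inv (lower_part B)"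
    and "res x \<equiv> b - B *v fst x - Bt *v snd x"
  assumes diag_nz: "\<forall>i. B$i$i \<noteq> 0" and rows_nz: "\<forall>i. Bt$i \<noteq> 0"
  shows "snd (gs_step B Bt b x) = snd x + Y *v res x"
    and "fst (gs_step B Bt b x) = fst x + (Li ** (mat 1 - Bt ** Y)) *v res x"
    and "res (gs_step B Bt b x) = ((mat 1 - B ** Li) ** (mat 1 - Bt ** Y)) *v res x"
proof -
  let ?P = "mat 1 - Bt ** Y"
  show snd_step: "snd (gs_step B Bt b x) = snd x + Y *v res x"
    unfolding res_def Y_def by (rule gs_step_snd[OF rows_nz])
  have "b - B *v fst x - Bt *v snd (gs_step B Bt b x) = res x - Bt *v (Y *v res x)"
    by (simp add: snd_step res_def algebra_simps)
  then have res_mid: "b - B *v fst x - Bt *v snd (gs_step B Bt b x) = ?P *v res x"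
    by (simp add: matrix_vector_mult_diff_rdistrib matrix_vector_mul_assoc)
  show fst_step: "fst (gs_step B Bt b x) = fst x + (Li ** ?P) *v res x"
    unfolding matrix_vector_mul_assoc[symmetric] res_mid[symmetric] Li_def
    by (rule gs_step_fst[OF diag_nz])
  have "res (gs_step B Bt b x)
      = (b - B *v fst x - Bt *v snd (gs_step B Bt b x)) - B *v ((Li ** ?P) *v res x)"
    by (simp add: res_def fst_step algebra_simps)
  also have "\<dots> = ?P *v res x - (B ** Li) *v (?P *v res x)"
    by (simp add: res_mid matrix_vector_mul_assoc matrix_mul_assoc)
  finally show "res (gs_step B Bt b x) = ((mat 1 - B ** Li) ** ?P) *v res x"
    by (simp add: matrix_vector_mult_diff_rdistrib flip: matrix_vector_mul_assoc)
qed

theorem mainTheorem2: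
  fixes B :: "real^('m::{finite,linorder})^('m::{finite,linorder})"
    and Bt :: "real^('k::finite)^('m::{finite,linorder})"
    and b :: "real^('m::{finite,linorder})"
    and x10 :: "real^('m::{finite,linorder})" and x20 :: "real^'k"
    and nm :: "real^('m::{finite,linorder})^('m::{finite,linorder}) \<Rightarrow> real"
  assumes solvable: "\<exists>y1 y2. B *v y1 + Bt *v y2 = b"
    and diag_nz: "\<forall>i. B$i$i \<noteq> 0"
    and rows_nz: "\<forall>i. Bt$i \<noteq> 0"
    and nm: "is_matrix_norm nm"
    and c1: "nm (mat 1 - B ** matrix_inv (lower_part B)) < 1"
    and c2: "nm (real CARD('m) *\<^sub>R mat 1 - Bt ** sign_mat Bt ** matrix_inv (row_norm_diag Bt))
               < real CARD('m)"
  shows "\<exists>y1 y2. ((\<lambda>k. (gs_step B Bt b ^^ k) (x10, x20)) \<longlonglongrightarrow> (y1, y2))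
                 \<and> B *v y1 + Bt *v y2 = b"
proof -
  define m where "m = real CARD('m)"
  define Y where "Y = (1 / m) *\<^sub>R (sign_mat Bt ** matrix_inv (row_norm_diag Bt))"
  define P where "P = mat 1 - Bt ** Y"
  define Q where "Q = mat 1 - B ** matrix_inv (lower_part B)"
  have nm_nonneg: "\<And>X. 0 \<le> nm X" and nm_mult: "\<And>X Z. nm (X ** Z) \<le> nm X * nm Z"
    using nm unfolding is_matrix_norm_def by blast+
  have "m > 0" by (simp add: m_def)
  then have "P = (1 / m) *\<^sub>R (m *\<^sub>R mat 1 - Bt ** sign_mat Bt ** matrix_inv (row_norm_diag Bt))"
    by (simp add: P_def Y_def matrix_scalar_ac scalar_matrix_assoc[symmetric] matrix_mul_assoc
        scaleR_right_diff_distrib)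
  then have "nm P < 1"
    using nm c2 \<open>m > 0\<close> by (simp add: is_matrix_norm_def m_def)
  moreover have "nm Q < 1"
    using c1 by (simp add: Q_def)
  ultimately have "nm (Q ** P) < 1"
    using nm_mult[of Q P] nm_nonneg mult_left_le_one_le[of "nm P" "nm Q"] by fastforce
  then show ?thesis
    unfolding P_def Q_def Y_def m_def
    by (rule iteration_converges_to_solution[OF nm _ gs_step_residual_form(2,1,3)[OF diag_nz rows_nz]])
qed

end
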